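(* Let $G$ be a finite group and $H$ a subgroup such that $\mathcal{O}_G(H)$ is Boolean, and let $A$ be an atom of $\mathcal{O}_G(H)$ with lattice complement $A^{\complement}$. If $K_1,K_2\in\mathcal{O}_{A^{\complement}}(H)$ with $K_1<K_2$, then $|K_1\vee A:K_1|\le|K_2\vee A:K_2|$. Equivalently, if $K_1,K_2\in\mathcal{O}_G(A)$ with $K_1<K_2$, then $|K_1:K_1\wedge A^{\complement}|\le|K_2:K_2\wedge A^{\complement}|$. Moreover, if $|G:A^{\complement}|=2$ then $|K\vee A:K|=2$ for all $K\in\mathcal{O}_{A^{\complement}}(H)$.
   Context: $\mathcal{O}_X(Y)=\{K\mid Y\le K\le X\}$, with $\vee$ the subgroup generated and $\wedge$ the intersection. Boolean means isomorphic to the lattice of subsets of a finite set. The lattice complement $K^{\complement}$ of $K\in\mathcal{O}_G(H)$ is the unique element with $K\wedge K^{\complement}=H$ and $K\vee K^{\complement}=G$. An atom is a minimal element of $\mathcal{O}_G(H)\setminus\{H\}$. *)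

theory Defs
  imports "HOL-Algebra.Algebra"
begin

definition ovl :: "('a, 'b) monoid_scheme \<Rightarrow> 'a set \<Rightarrow> 'a set \<Rightarrow> 'a set set" where
  "ovl M U V = {K. subgroup K M \<and> V \<subseteq> K \<and> K \<subseteq> U}"

definition sjoin :: "('a, 'b) monoid_scheme \<Rightarrow> 'a set \<Rightarrow> 'a set \<Rightarrow> 'a set" where
  "sjoin M K L = generate M (K \<union> L)"

definition sindex :: "('a, 'b) monoid_scheme \<Rightarrow> 'a set \<Rightarrow> 'a set \<Rightarrow> nat" where
  "sindex M L K = card (rcosets\<^bsub>M\<lparr>carrier := L\<rparr>\<^esub> K)"

text \<open>O_G(H) is Boolean: order-isomorphic (hence lattice-isomorphic) to the
  power set of a finite set (w.l.o.g. a finite set of naturals).\<close>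
definition boolean_ovl :: "('a, 'b) monoid_scheme \<Rightarrow> 'a set \<Rightarrow> bool" where
  "boolean_ovl M H \<longleftrightarrow> (\<exists>S :: nat set. \<exists>f. finite S \<and> bij_betw f (ovl M (carrier M) H) (Pow S) \<and>
      (\<forall>K\<in>ovl M (carrier M) H. \<forall>L\<in>ovl M (carrier M) H. K \<subseteq> L \<longleftrightarrow> f K \<subseteq> f L))"

definition atom_ovl :: "('a, 'b) monoid_scheme \<Rightarrow> 'a set \<Rightarrow> 'a set \<Rightarrow> bool" where
  "atom_ovl M H A \<longleftrightarrow> A \<in> ovl M (carrier M) H \<and> A \<noteq> H \<and>
     (\<forall>K\<in>ovl M (carrier M) H. K \<noteq> H \<longrightarrow> K \<subseteq> A \<longrightarrow> K = A)"

end

(* An order isomorphism onto a power set turns joins and meets into unions and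
   intersections, so a Boolean interval O_G(H) is distributive. For K1 <= K2 <= A^c this
   gives K2 /\ (K1 \/ A) = K1 \/ (K2 /\ A) = K1, and then the first inequality is the
   elementary |L : K /\ L| <= |L' : K| for L <= L', since (K /\ L) x |-> K x is injective.
   The second inequality is that same fact without any lattice theory. Finally
   1 < |K \/ A : K| <= |A^c \/ A : A^c| = |G : A^c|, as A is not below K. *)
theory Submission
  imports Defs
begin

lemma sindex_eq_card_image: "sindex G L K = card ((\<lambda>x. K #>\<^bsub>G\<^esub> x) ` L)"
proof -
  have "rcosets\<^bsub>G\<lparr>carrier := L\<rparr>\<^esub> K = (\<lambda>x. K #>\<^bsub>G\<^esub> x) ` L"
    unfolding RCOSETS_def r_coset_def by auto
  then show ?thesis
    unfolding sindex_def by simp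
qed

lemma (in group) rcos_inter_subgroup:
  assumes "K \<subseteq> carrier G" "subgroup L G" "x \<in> L"
  shows "(K \<inter> L) #> x = (K #> x) \<inter> L"
proof (intro equalityI subsetI)
  fix y assume "y \<in> (K \<inter> L) #> x"
  then obtain k where "k \<in> K" "k \<in> L" "y = k \<otimes> x"
    unfolding r_coset_def by blast
  then show "y \<in> (K #> x) \<inter> L"
    using subgroup.m_closed[OF assms(2) _ assms(3)] unfolding r_coset_def by blast
next
  fix y assume "y \<in> (K #> x) \<inter> L"
  then obtain k where k: "k \<in> K" "y = k \<otimes> x" "y \<in> L"
    unfolding r_coset_def by blast
  have "x \<in> carrier G" "y \<in> carrier G"
    using subgroup.mem_carrier[OF assms(2)] assms(3) k(3) by auto
  then have "k = y \<otimes> inv x"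
    using k(1,2) assms(1) inv_solve_right[of k y x] by blast
  then have "k \<in> L"
    using subgroup.m_closed[OF assms(2) k(3) subgroup.m_inv_closed[OF assms(2,3)]] by simp
  then show "y \<in> (K \<inter> L) #> x"
    using k unfolding r_coset_def by blast
qed

lemma (in group) sindex_inter_le:
  assumes "subgroup K G" "subgroup L G" "L \<subseteq> L'" "finite L'"
  shows "sindex G L (K \<inter> L) \<le> sindex G L' K"
proof -
  have "(\<lambda>x. (K \<inter> L) #> x) ` L = (\<lambda>C. C \<inter> L) ` (\<lambda>x. K #> x) ` L"
    using rcos_inter_subgroup[OF subgroup.subset[OF assms(1)] assms(2)] by (simp add: image_image)
  then have "card ((\<lambda>x. (K \<inter> L) #> x) ` L) \<le> card ((\<lambda>x. K #> x) ` L)"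
    using assms(3,4) by (metis card_image_le finite_imageI finite_subset)
  also have "\<dots> \<le> card ((\<lambda>x. K #> x) ` L')"
    using assms(3,4) by (intro card_mono) auto
  finally show ?thesis
    unfolding sindex_eq_card_image .
qed

lemma (in group) one_less_sindex:
  assumes "subgroup K G" "subgroup L G" "finite L" "\<not> L \<subseteq> K"
  shows "1 < sindex G L K"
proof -
  obtain a where a: "a \<in> L" "a \<notin> K"
    using assms(4) by blast
  have "K #> \<one> \<noteq> K #> a"
    using rcos_self[OF subgroup.mem_carrier[OF assms(2) a(1)] assms(1)] a(2)
      subgroup.subset[OF assms(1)] by auto
  then have "2 = card {K #> \<one>, K #> a}"
    by simp
  also have "\<dots> \<le> card ((\<lambda>x. K #> x) ` L)"
    using assms(3) a(1) subgroup.one_closed[OF assms(2)] by (intro card_mono) auto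
  finally show ?thesis
    unfolding sindex_eq_card_image by simp
qed

lemma (in group) sindex_inter_mono:
  assumes "subgroup K1 G" "subgroup K2 G" "subgroup C G" "K1 \<subseteq> K2" "finite K2"
  shows "sindex G K1 (K1 \<inter> C) \<le> sindex G K2 (K2 \<inter> C)"
proof -
  have "K1 \<inter> C = (K2 \<inter> C) \<inter> K1"
    using assms(4) by blast
  then show ?thesis
    using sindex_inter_le[of "K2 \<inter> C" K1 K2] subgroups_Inter_pair[OF assms(2,3)] assms by simp
qed

lemma order_iso_Pow_sup:
  assumes f: "bij_betw f D (Pow S)" and mono: "\<forall>K\<in>D. \<forall>L\<in>D. K \<subseteq> L \<longleftrightarrow> f K \<subseteq> f L"
    and D: "K \<in> D" "L \<in> D" "J \<in> D" and upper: "K \<subseteq> J" "L \<subseteq> J"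
    and least: "\<And>M. M \<in> D \<Longrightarrow> K \<subseteq> M \<Longrightarrow> L \<subseteq> M \<Longrightarrow> J \<subseteq> M"
  shows "f J = f K \<union> f L"
proof -
  have "f K \<union> f L \<in> f ` D"
    using f D by (auto simp: bij_betw_def)
  then obtain M where M: "M \<in> D" "f M = f K \<union> f L"
    by blast
  then have "K \<subseteq> M" "L \<subseteq> M"
    using mono D by auto
  then have "f J \<subseteq> f M"
    using mono least M(1) D(3) by blast
  moreover have "f K \<subseteq> f J" "f L \<subseteq> f J"
    using mono D upper by auto
  ultimately show ?thesis
    using M(2) by blast
qed

lemma order_iso_Pow_inf:
  assumes f: "bij_betw f D (Pow S)" and mono: "\<forall>K\<in>D. \<forall>L\<in>D. K \<subseteq> L \<longleftrightarrow> f K \<subseteq> f L"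
    and D: "K \<in> D" "L \<in> D" "J \<in> D" and lower: "J \<subseteq> K" "J \<subseteq> L"
    and greatest: "\<And>M. M \<in> D \<Longrightarrow> M \<subseteq> K \<Longrightarrow> M \<subseteq> L \<Longrightarrow> M \<subseteq> J"
  shows "f J = f K \<inter> f L"
proof -
  have "f K \<inter> f L \<in> f ` D"
    using f D by (auto simp: bij_betw_def)
  then obtain M where M: "M \<in> D" "f M = f K \<inter> f L"
    by blast
  then have "M \<subseteq> K" "M \<subseteq> L"
    using mono D by auto
  then have "f M \<subseteq> f J"
    using mono greatest M(1) D(3) by blast
  moreover have "f J \<subseteq> f K" "f J \<subseteq> f L"
    using mono D lower by auto
  ultimately show ?thesis
    using M(2) by blast
qed

lemma sjoin_upper1: "K \<subseteq> sjoin M K L"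
  and sjoin_upper2: "L \<subseteq> sjoin M K L"
  unfolding sjoin_def by (auto intro: generate.incl)

lemma sjoin_commute: "sjoin M K L = sjoin M L K"
  unfolding sjoin_def by (simp add: Un_commute)

lemma (in group) subgroup_sjoin:
  "subgroup K G \<Longrightarrow> subgroup L G \<Longrightarrow> subgroup (sjoin G K L) G"
  unfolding sjoin_def by (simp add: generate_is_subgroup subgroup.subset)

lemma (in group) sjoin_least:
  "subgroup M G \<Longrightarrow> K \<subseteq> M \<Longrightarrow> L \<subseteq> M \<Longrightarrow> sjoin G K L \<subseteq> M"
  unfolding sjoin_def by (simp add: generate_subgroup_incl)

lemma (in group) sjoin_absorb2:
  "subgroup K G \<Longrightarrow> L \<subseteq> K \<Longrightarrow> sjoin G K L = K"
  unfolding sjoin_def by (rule generateI[symmetric]) auto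

lemma (in group) inter_in_ovl:
  "K \<in> ovl G U V \<Longrightarrow> L \<in> ovl G U V \<Longrightarrow> K \<inter> L \<in> ovl G U V"
  unfolding ovl_def by (auto intro: subgroups_Inter_pair)

lemma (in group) sjoin_in_ovl:
  assumes "subgroup U G" "K \<in> ovl G U V" "L \<in> ovl G U V"
  shows "sjoin G K L \<in> ovl G U V"
proof -
  have "subgroup K G" "subgroup L G" "V \<subseteq> K" "K \<subseteq> U" "L \<subseteq> U"
    using assms(2,3) unfolding ovl_def by auto
  then show ?thesis
    unfolding ovl_def using subgroup_sjoin sjoin_least[OF assms(1)] sjoin_upper1[of K G L] by blast
qed

lemma (in group) boolean_ovl_inter_sjoin_distrib:
  assumes "boolean_ovl G H"
    and "K \<in> ovl G (carrier G) H" "L \<in> ovl G (carrier G) H" "M \<in> ovl G (carrier G) H"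
  shows "M \<inter> sjoin G K L = sjoin G (M \<inter> K) (M \<inter> L)"
proof -
  define D where "D = ovl G (carrier G) H"
  obtain S :: "nat set" and f where iso: "bij_betw f D (Pow S)"
    "\<forall>K\<in>D. \<forall>L\<in>D. K \<subseteq> L \<longleftrightarrow> f K \<subseteq> f L"
    using assms(1) unfolding boolean_ovl_def D_def by blast
  have inter_D: "K \<inter> L \<in> D" if "K \<in> D" "L \<in> D" for K L
    using that unfolding D_def by (rule inter_in_ovl)
  have sjoin_D: "sjoin G K L \<in> D" if "K \<in> D" "L \<in> D" for K L
    using that unfolding D_def by (rule sjoin_in_ovl[OF subgroup_self])
  have f_sjoin: "f (sjoin G K L) = f K \<union> f L" if "K \<in> D" "L \<in> D" for K L
    using that sjoin_D
    by (intro order_iso_Pow_sup[OF iso] sjoin_upper1 sjoin_upper2 sjoin_least)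
      (auto simp: D_def ovl_def)
  have f_inter: "f (K \<inter> L) = f K \<inter> f L" if "K \<in> D" "L \<in> D" for K L
    using that inter_D by (intro order_iso_Pow_inf[OF iso]) auto
  have "f (M \<inter> sjoin G K L) = f (sjoin G (M \<inter> K) (M \<inter> L))"
    using assms(2-4) by (simp add: D_def [symmetric] f_sjoin f_inter inter_D sjoin_D Int_Un_distrib)
  then show ?thesis
    using assms(2-4) bij_betw_imp_inj_on[OF iso(1)]
    by (simp add: D_def [symmetric] inter_D sjoin_D inj_on_eq_iff)
qed

lemma (in group) boolean_ovl_inter_sjoin_eq:
  assumes "boolean_ovl G H" "A \<in> ovl G (carrier G) H"
    and "K1 \<in> ovl G (carrier G) H" "K2 \<in> ovl G (carrier G) H" "K1 \<subseteq> K2" "K2 \<inter> A = H"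
  shows "K2 \<inter> sjoin G K1 A = K1"
proof -
  have "K2 \<inter> sjoin G K1 A = sjoin G K1 H"
    using boolean_ovl_inter_sjoin_distrib[OF assms(1,3,2,4)] assms(5,6) by (simp add: Int_absorb1)
  also have "\<dots> = K1"
    using assms(3) unfolding ovl_def by (intro sjoin_absorb2) auto
  finally show ?thesis .
qed

lemma (in group) sindex_sjoin_mono:
  assumes "finite (carrier G)" "boolean_ovl G H" "A \<in> ovl G (carrier G) H"
    and "K1 \<in> ovl G (carrier G) H" "K2 \<in> ovl G (carrier G) H" "K1 \<subseteq> K2" "K2 \<inter> A = H"
  shows "sindex G (sjoin G K1 A) K1 \<le> sindex G (sjoin G K2 A) K2"
proof -
  have sub: "subgroup A G" "subgroup K1 G" "subgroup K2 G"
    using assms(3-5) unfolding ovl_def by auto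
  have "sindex G (sjoin G K1 A) K1 = sindex G (sjoin G K1 A) (K2 \<inter> sjoin G K1 A)"
    using boolean_ovl_inter_sjoin_eq[OF assms(2-7)] by simp
  also have "\<dots> \<le> sindex G (sjoin G K2 A) K2"
  proof (rule sindex_inter_le)
    show "sjoin G K1 A \<subseteq> sjoin G K2 A"
      using assms(6) sjoin_upper1[of K2 G A] sjoin_upper2[of A G K2]
      by (intro sjoin_least subgroup_sjoin sub) auto
    show "finite (sjoin G K2 A)"
      using assms(1) subgroup.subset[OF subgroup_sjoin[OF sub(3,1)]] by (rule finite_subset[rotated])
  qed (use sub subgroup_sjoin in auto)
  finally show ?thesis .
qed

lemma (in group) sindex_sjoin_bounds:
  assumes "finite (carrier G)" "boolean_ovl G H" "A \<in> ovl G (carrier G) H" "A \<noteq> H"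
    and "Ac \<in> ovl G (carrier G) H" "Ac \<inter> A = H" "sjoin G Ac A = carrier G"
    and "K \<in> ovl G Ac H"
  shows "1 < sindex G (sjoin G K A) K" "sindex G (sjoin G K A) K \<le> sindex G (carrier G) Ac"
proof -
  have K: "K \<in> ovl G (carrier G) H" "K \<subseteq> Ac" "K \<inter> A = H"
    using assms(5,6,8) unfolding ovl_def by auto
  have "sindex G (sjoin G K A) K \<le> sindex G (sjoin G Ac A) Ac"
    using sindex_sjoin_mono[OF assms(1-3) K(1) assms(5) K(2) assms(6)] .
  then show "sindex G (sjoin G K A) K \<le> sindex G (carrier G) Ac"
    using assms(7) by simp
  have "\<not> sjoin G K A \<subseteq> K"
    using assms(3,4) K(3) sjoin_upper2[of A G K] unfolding ovl_def by blast
  moreover have "subgroup K G" "subgroup (sjoin G K A) G"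
    using K(1) assms(3) unfolding ovl_def by (auto intro: subgroup_sjoin)
  moreover from this(2) have "finite (sjoin G K A)"
    using assms(1) subgroup.subset by (blast intro: finite_subset)
  ultimately show "1 < sindex G (sjoin G K A) K"
    by (intro one_less_sindex)
qed

theorem lemma10p6:
  fixes G :: "('a, 'b) monoid_scheme" and H A Ac :: "'a set"
  assumes "group G" and "finite (carrier G)" and "subgroup H G"
    and "boolean_ovl G H"
    and "atom_ovl G H A"
    and "Ac \<in> ovl G (carrier G) H" and "A \<inter> Ac = H" and "sjoin G A Ac = carrier G"
  shows "(\<forall>K1\<in>ovl G Ac H. \<forall>K2\<in>ovl G Ac H. K1 \<subset> K2 \<longrightarrow>
            sindex G (sjoin G K1 A) K1 \<le> sindex G (sjoin G K2 A) K2)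
      \<and> (\<forall>K1\<in>ovl G (carrier G) A. \<forall>K2\<in>ovl G (carrier G) A. K1 \<subset> K2 \<longrightarrow>
            sindex G K1 (K1 \<inter> Ac) \<le> sindex G K2 (K2 \<inter> Ac))
      \<and> (sindex G (carrier G) Ac = 2 \<longrightarrow>
            (\<forall>K\<in>ovl G Ac H. sindex G (sjoin G K A) K = 2))"
proof -
  interpret group G by fact
  have A: "A \<in> ovl G (carrier G) H" "A \<noteq> H"
    using assms(5) unfolding atom_ovl_def by blast+
  have "sjoin G Ac A = carrier G"
    using assms(8) by (simp add: sjoin_commute)
  note index_bounds = sindex_sjoin_bounds[OF assms(2,4) A assms(6) _ this]
  have "sindex G (sjoin G K1 A) K1 \<le> sindex G (sjoin G K2 A) K2"
    if "K1 \<in> ovl G Ac H" "K2 \<in> ovl G Ac H" "K1 \<subseteq> K2" for K1 K2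
    using that assms(6,7) by (intro sindex_sjoin_mono[OF assms(2,4) A(1)]) (auto simp: ovl_def)
  moreover have "sindex G K1 (K1 \<inter> Ac) \<le> sindex G K2 (K2 \<inter> Ac)"
    if "K1 \<in> ovl G (carrier G) A" "K2 \<in> ovl G (carrier G) A" "K1 \<subset> K2" for K1 K2
    using that assms(2,6) by (intro sindex_inter_mono) (auto simp: ovl_def intro: finite_subset)
  moreover have "sindex G (sjoin G K A) K = 2"
    if "sindex G (carrier G) Ac = 2" "K \<in> ovl G Ac H" for K
    using index_bounds[OF _ that(2)] that(1) assms(7) by (simp add: Int_commute)
  ultimately show ?thesis
    by (meson psubset_imp_subset)
qed

end
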